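(* Let $0\le\eta_1<1/5$ and let $\sigma,\sigma_0:[n]\to[K]$ be assignments all of whose community sizes lie in $[(1-\eta_1)\frac nK,(1+\eta_1)\frac nK]$, with $d(\sigma,\sigma_0)=m$ for an integer $0<m<n$. Set $\eta=5\eta_1$. Then $$\alpha(\sigma;\sigma_0)\wedge\gamma(\sigma;\sigma_0)\ge\begin{cases}\frac{(1-\eta)nm}{K}-m^2, & m\le\frac{n}{2K},\\ \frac{2(1-\eta)nm}{9K}, & m>\frac{n}{2K}.\end{cases}$$
   Context: $d(\sigma_1,\sigma_2)=\min_\delta d_H(\sigma_1,\delta\circ\sigma_2)$ over permutations $\delta$ of $[K]$, $d_H$ the Hamming distance. $\alpha(\sigma;\sigma_0)=|\{(i,j):i<j,\ \sigma_0(i)=\sigma_0(j),\ \sigma(i)\ne\sigma(j)\}|$ and $\gamma(\sigma;\sigma_0)=|\{(i,j):i<j,\ \sigma_0(i)\ne\sigma_0(j),\ \sigma(i)=\sigma(j)\}|$. *)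

theory Defs
  imports "HOL-Analysis.Analysis" "HOL-Combinatorics.Permutations"
begin

definition is_assignment :: "nat \<Rightarrow> nat \<Rightarrow> (nat \<Rightarrow> nat) \<Rightarrow> bool" where
  "is_assignment n K \<sigma> \<longleftrightarrow> (\<forall>i<n. \<sigma> i < K)"

definition hamming :: "nat \<Rightarrow> (nat \<Rightarrow> nat) \<Rightarrow> (nat \<Rightarrow> nat) \<Rightarrow> nat" where
  "hamming n \<sigma>1 \<sigma>2 = card {i. i < n \<and> \<sigma>1 i \<noteq> \<sigma>2 i}"

definition dist_assign :: "nat \<Rightarrow> nat \<Rightarrow> (nat \<Rightarrow> nat) \<Rightarrow> (nat \<Rightarrow> nat) \<Rightarrow> nat" where
  "dist_assign n K \<sigma>1 \<sigma>2 = Min {hamming n \<sigma>1 (\<delta> \<circ> \<sigma>2) | \<delta>. \<delta> permutes {..<K}}"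

definition alpha :: "nat \<Rightarrow> (nat \<Rightarrow> nat) \<Rightarrow> (nat \<Rightarrow> nat) \<Rightarrow> nat" where
  "alpha n \<sigma> \<sigma>0 = card {(i, j). i < j \<and> j < n \<and> \<sigma>0 i = \<sigma>0 j \<and> \<sigma> i \<noteq> \<sigma> j}"

definition gamma :: "nat \<Rightarrow> (nat \<Rightarrow> nat) \<Rightarrow> (nat \<Rightarrow> nat) \<Rightarrow> nat" where
  "gamma n \<sigma> \<sigma>0 = card {(i, j). i < j \<and> j < n \<and> \<sigma>0 i \<noteq> \<sigma>0 j \<and> \<sigma> i = \<sigma> j}"

definition comm_size :: "nat \<Rightarrow> (nat \<Rightarrow> nat) \<Rightarrow> nat \<Rightarrow> nat" where
  "comm_size n \<sigma> k = card {i. i < n \<and> \<sigma> i = k}"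

definition balanced :: "nat \<Rightarrow> nat \<Rightarrow> real \<Rightarrow> (nat \<Rightarrow> nat) \<Rightarrow> bool" where
  "balanced n K \<eta>1 \<sigma> \<longleftrightarrow> (\<forall>k<K.
      (1 - \<eta>1) * real n / real K \<le> real (comm_size n \<sigma> k) \<and>
      real (comm_size n \<sigma> k) \<le> (1 + \<eta>1) * real n / real K)"

end

theory Submission
  imports Defs
begin

(*
  Fix a relabelling \<delta> of \<sigma>0 attaining the distance m and call the m nodes on which \<sigma> and
  \<delta> \<circ> \<sigma>0 disagree misclassified. Each misclassified node is separated by \<sigma> from all
  correctly classified nodes of its \<sigma>0-community, of which there are at least
  (1 - \<eta>1) n/K - m; this gives the bound for small m.

  For large m, let a_u be the size of the \<sigma>0-community u and M_u its largest intersection with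
  a \<sigma>-community; counting ordered pairs gives 2\<alpha> \<ge> \<Sigma>_u a_u (a_u - M_u). Intersections
  larger than half the maximal community size must lie in distinct \<sigma>-communities, so they extend
  to a relabelling, and minimality of m bounds their total by n - m. As a_u \<ge> (1 - \<eta>1) n/K,
  and a_u - M_u is a fixed fraction of a_u on the remaining communities, the sum is at least a
  constant multiple of (n/K) m.

  Both bounds pass to \<gamma>, which is \<alpha> with \<sigma> and \<sigma>0 exchanged, since d is symmetric.
*)

lemma hamming_comp_permutes_swap:
  assumes "\<delta> permutes S"
  shows "hamming n \<sigma>1 (\<delta> \<circ> \<sigma>2) = hamming n \<sigma>2 (inv \<delta> \<circ> \<sigma>1)"
  unfolding hamming_def using permutes_inverses[OF assms] by (metis comp_apply)

lemma dist_assign_commute: "dist_assign n K \<sigma>1 \<sigma>2 = dist_assign n K \<sigma>2 \<sigma>1"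
proof -
  have sub: "{hamming n \<sigma>1 (\<delta> \<circ> \<sigma>2) | \<delta>. \<delta> permutes {..<K}}
        \<subseteq> {hamming n \<sigma>2 (\<delta> \<circ> \<sigma>1) | \<delta>. \<delta> permutes {..<K}}" for \<sigma>1 \<sigma>2
    using hamming_comp_permutes_swap permutes_inv by blast
  have "{hamming n \<sigma>1 (\<delta> \<circ> \<sigma>2) | \<delta>. \<delta> permutes {..<K}}
             = {hamming n \<sigma>2 (\<delta> \<circ> \<sigma>1) | \<delta>. \<delta> permutes {..<K}}"
    using sub[of \<sigma>1 \<sigma>2] sub[of \<sigma>2 \<sigma>1] by (rule subset_antisym)
  then show ?thesis
    unfolding dist_assign_def by simp
qed

lemma finite_hamming_values:
  "finite {hamming n \<sigma>1 (\<delta> \<circ> \<sigma>2) | \<delta>. \<delta> permutes {..<K}}"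
  using finite_permutations[of "{..<K}"] by (simp add: finite_image_set)

lemma dist_assign_le_hamming:
  assumes "\<delta> permutes {..<K}"
  shows "dist_assign n K \<sigma>1 \<sigma>2 \<le> hamming n \<sigma>1 (\<delta> \<circ> \<sigma>2)"
  unfolding dist_assign_def using assms by (intro Min_le finite_hamming_values) blast

lemma dist_assign_attained:
  obtains \<delta> where "\<delta> permutes {..<K}" "hamming n \<sigma>1 (\<delta> \<circ> \<sigma>2) = dist_assign n K \<sigma>1 \<sigma>2"
proof -
  have "dist_assign n K \<sigma>1 \<sigma>2 \<in> {hamming n \<sigma>1 (\<delta> \<circ> \<sigma>2) | \<delta>. \<delta> permutes {..<K}}"
    unfolding dist_assign_def using permutes_id by (intro Min_in finite_hamming_values) blast
  then show ?thesis using that by force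
qed

lemma hamming_add_card_agree:
  "hamming n \<sigma>1 \<sigma>2 + card {i. i < n \<and> \<sigma>1 i = \<sigma>2 i} = n"
proof -
  have "hamming n \<sigma>1 \<sigma>2 + card {i. i < n \<and> \<sigma>1 i = \<sigma>2 i}
        = card ({i. i < n \<and> \<sigma>1 i \<noteq> \<sigma>2 i} \<union> {i. i < n \<and> \<sigma>1 i = \<sigma>2 i})"
    unfolding hamming_def by (rule card_Un_disjoint[symmetric]) auto
  also have "{i. i < n \<and> \<sigma>1 i \<noteq> \<sigma>2 i} \<union> {i. i < n \<and> \<sigma>1 i = \<sigma>2 i} = {..<n}"
    by auto
  finally show ?thesis by simp
qed

lemma inj_on_extends_to_permutes:
  assumes "finite S" "B \<subseteq> S" "inj_on f B" "f ` B \<subseteq> S"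
  obtains p where "p permutes S" "\<And>u. u \<in> B \<Longrightarrow> p u = f u"
proof -
  have "finite B" using assms(1,2) finite_subset by blast
  then have "card (S - B) = card (S - f ` B)"
    using assms by (simp add: card_Diff_subset card_image)
  then obtain g where g: "bij_betw g (S - B) (S - f ` B)"
    using finite_same_card_bij[of "S - B" "S - f ` B"] assms(1) by auto
  define p where "p x = (if x \<in> B then f x else if x \<in> S then g x else x)" for x
  have "bij_betw p B (f ` B)"
    using assms(3) by (simp add: bij_betw_imageI bij_betw_cong p_def)
  moreover have "bij_betw p (S - B) (S - f ` B)"
    using g by (rule bij_betw_cong[THEN iffD1, rotated]) (simp add: p_def)
  ultimately have "bij_betw p (B \<union> (S - B)) (f ` B \<union> (S - f ` B))"
    by (rule bij_betw_combine) blast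
  moreover have "B \<union> (S - B) = S" "f ` B \<union> (S - f ` B) = S"
    using assms by auto
  ultimately have "p permutes S"
    using assms(2) by (intro bij_imp_permutes) (auto simp: p_def)
  then show ?thesis using that by (simp add: p_def)
qed

lemma card_ordered_pairs_eq_double:
  fixes R :: "nat \<Rightarrow> nat \<Rightarrow> bool"
  assumes sym: "\<And>i j. R i j \<Longrightarrow> R j i" and irrefl: "\<And>i. \<not> R i i"
  shows "card {(i, j). i < n \<and> j < n \<and> R i j} = 2 * card {(i, j). i < j \<and> j < n \<and> R i j}"
proof -
  define A where "A = {(i, j). i < j \<and> j < n \<and> R i j}"
  have "A \<subseteq> {..<n} \<times> {..<n}"
    by (auto simp: A_def)
  then have "finite A"
    by (rule finite_subset) simp
  have "{(i, j). i < n \<and> j < n \<and> R i j} = A \<union> prod.swap ` A"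
    using sym irrefl by (auto simp: A_def image_iff) (metis linorder_neqE_nat)
  also have "card \<dots> = card A + card (prod.swap ` A)"
    using \<open>finite A\<close> by (intro card_Un_disjoint) (auto simp: A_def)
  also have "\<dots> = 2 * card A"
    by (simp add: card_image)
  finally show ?thesis
    by (simp add: A_def)
qed

lemma gamma_eq_alpha_swap: "gamma n \<sigma> \<sigma>0 = alpha n \<sigma>0 \<sigma>"
  unfolding alpha_def gamma_def by (rule arg_cong[where f = card]) auto

lemma sum_comp_eq_sum_comm_size:
  fixes h :: "nat \<Rightarrow> 'a :: comm_semiring_1"
  assumes "is_assignment n K \<sigma>"
  shows "(\<Sum>i<n. h (\<sigma> i)) = (\<Sum>u<K. of_nat (comm_size n \<sigma> u) * h u)"
proof -
  have "(\<Sum>i<n. h (\<sigma> i)) = (\<Sum>u<K. \<Sum>i\<in>{i. i \<in> {..<n} \<and> \<sigma> i = u}. h (\<sigma> i))"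
    using assms by (intro sum.group[symmetric]) (auto simp: is_assignment_def)
  also have "\<dots> = (\<Sum>u<K. \<Sum>i\<in>{i. i < n \<and> \<sigma> i = u}. h u)"
    by (intro sum.cong) auto
  finally show ?thesis by (simp add: comm_size_def)
qed

lemma min_max_eq_cases:
  fixes i j i' j' :: "'a :: linorder"
  assumes "min i j = min i' j'" "max i j = max i' j'"
  shows "i = i' \<and> j = j' \<or> i = j' \<and> j = i'"
  using assms by (metis max.commute max_def min_def)

lemma card_cross_pairs_le_alpha:
  assumes "C \<subseteq> {..<n}" "W \<subseteq> {..<n}" "C \<inter> W = {}"
    and split: "\<And>i j. i \<in> C \<Longrightarrow> j \<in> W \<Longrightarrow> \<sigma>0 i = \<sigma>0 j \<Longrightarrow> \<sigma> i \<noteq> \<sigma> j"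
  shows "card (Sigma W (\<lambda>j. {i \<in> C. \<sigma>0 i = \<sigma>0 j})) \<le> alpha n \<sigma> \<sigma>0"
proof -
  define Q where "Q = Sigma W (\<lambda>j. {i \<in> C. \<sigma>0 i = \<sigma>0 j})"
  define pair where "pair = (\<lambda>(j::nat, i::nat). (min i j, max i j))"
  have "inj_on pair Q"
  proof (rule inj_onI)
    fix x y assume "x \<in> Q" "y \<in> Q" and eq: "pair x = pair y"
    obtain j i j' i' where xy: "x = (j, i)" "y = (j', i')" by (cases x, cases y)
    have "i \<in> C" "i' \<in> C" "j \<in> W" "j' \<in> W"
      using \<open>x \<in> Q\<close> \<open>y \<in> Q\<close> xy by (auto simp: Q_def)
    then have "i \<noteq> j'" "i' \<noteq> j"
      using assms(3) by auto
    moreover have "min i j = min i' j'" "max i j = max i' j'"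
      using eq xy by (simp_all add: pair_def)
    ultimately show "x = y"
      using min_max_eq_cases xy by blast
  qed
  moreover have "pair ` Q \<subseteq> {(i, j). i < j \<and> j < n \<and> \<sigma>0 i = \<sigma>0 j \<and> \<sigma> i \<noteq> \<sigma> j}"
  proof
    fix y assume "y \<in> pair ` Q"
    then obtain j i where "(j, i) \<in> Q" "y = pair (j, i)" by force
    then have "i \<in> C" "j \<in> W" "\<sigma>0 i = \<sigma>0 j" by (auto simp: Q_def)
    then have "i \<noteq> j" "i < n" "j < n" "\<sigma> i \<noteq> \<sigma> j"
      using assms split by auto
    then show "y \<in> {(i, j). i < j \<and> j < n \<and> \<sigma>0 i = \<sigma>0 j \<and> \<sigma> i \<noteq> \<sigma> j}"
      using \<open>\<sigma>0 i = \<sigma>0 j\<close> \<open>y = pair (j, i)\<close> by (auto simp: pair_def min_def max_def)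
  qed
  moreover have "finite {(i, j). i < j \<and> j < n \<and> \<sigma>0 i = \<sigma>0 j \<and> \<sigma> i \<noteq> \<sigma> j}"
    by (rule finite_subset[of _ "{..<n} \<times> {..<n}"]) auto
  ultimately show ?thesis
    unfolding alpha_def Q_def[symmetric] by (rule card_inj_on_le)
qed

lemma alpha_ge_misclassified_bound:
  fixes L :: real
  assumes "is_assignment n K \<sigma>0" and "\<And>k. k < K \<Longrightarrow> L \<le> real (comm_size n \<sigma>0 k)"
    and "hamming n \<sigma> (\<delta> \<circ> \<sigma>0) = m"
  shows "real m * (L - real m) \<le> real (alpha n \<sigma> \<sigma>0)"
proof -
  define W where "W = {i. i < n \<and> \<sigma> i \<noteq> \<delta> (\<sigma>0 i)}"
  define C where "C = {i. i < n \<and> \<sigma> i = \<delta> (\<sigma>0 i)}"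
  have "card W = m" "finite W" "finite C"
    using assms(3) by (simp_all add: hamming_def W_def C_def)
  have partners: "L - real m \<le> real (card {i \<in> C. \<sigma>0 i = \<sigma>0 j})" if "j \<in> W" for j
  proof -
    have "\<sigma>0 j < K" using assms(1) that by (simp add: is_assignment_def W_def)
    have "comm_size n \<sigma>0 (\<sigma>0 j) \<le> card ({i \<in> C. \<sigma>0 i = \<sigma>0 j} \<union> W)"
      unfolding comm_size_def using \<open>finite W\<close> \<open>finite C\<close>
      by (intro card_mono) (auto simp: C_def W_def)
    also have "\<dots> \<le> card {i \<in> C. \<sigma>0 i = \<sigma>0 j} + card W"
      by (rule card_Un_le)
    finally show ?thesis using assms(2)[OF \<open>\<sigma>0 j < K\<close>] \<open>card W = m\<close> by linarith
  qed
  have "real m * (L - real m) = (\<Sum>j\<in>W. L - real m)"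
    using \<open>card W = m\<close> by simp
  also have "\<dots> \<le> (\<Sum>j\<in>W. real (card {i \<in> C. \<sigma>0 i = \<sigma>0 j}))"
    by (rule sum_mono) (rule partners)
  also have "\<dots> = real (card (Sigma W (\<lambda>j. {i \<in> C. \<sigma>0 i = \<sigma>0 j})))"
    using \<open>finite W\<close> \<open>finite C\<close> by simp
  also have "\<dots> \<le> real (alpha n \<sigma> \<sigma>0)"
    \<comment> \<open>a correctly and a wrongly classified node of one \<open>\<sigma>0\<close>-community are split by \<open>\<sigma>\<close>\<close>
    by (subst of_nat_le_iff, rule card_cross_pairs_le_alpha) (auto simp: C_def W_def)
  finally show ?thesis .
qed

lemma alpha_ge_small_distance_bound:
  assumes "is_assignment n K \<sigma>0" "balanced n K \<eta>1 \<sigma>0" "dist_assign n K \<sigma> \<sigma>0 = m"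
  shows "(1 - \<eta>1) * real n * real m / real K - real m ^ 2 \<le> real (alpha n \<sigma> \<sigma>0)"
proof -
  obtain \<delta> where \<delta>: "hamming n \<sigma> (\<delta> \<circ> \<sigma>0) = m"
    using dist_assign_attained assms(3) by metis
  have "real m * ((1 - \<eta>1) * real n / real K - real m) \<le> real (alpha n \<sigma> \<sigma>0)"
    by (rule alpha_ge_misclassified_bound[OF assms(1) _ \<delta>]) (use assms(2) in \<open>simp add: balanced_def\<close>)
  then show ?thesis
    by (simp add: field_simps power2_eq_square)
qed

definition overlap :: "nat \<Rightarrow> (nat \<Rightarrow> nat) \<Rightarrow> (nat \<Rightarrow> nat) \<Rightarrow> nat \<Rightarrow> nat \<Rightarrow> nat" where
  "overlap n \<sigma>0 \<sigma> u v = card {i. i < n \<and> \<sigma>0 i = u \<and> \<sigma> i = v}"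

definition max_overlap :: "nat \<Rightarrow> nat \<Rightarrow> (nat \<Rightarrow> nat) \<Rightarrow> (nat \<Rightarrow> nat) \<Rightarrow> nat \<Rightarrow> nat" where
  "max_overlap n K \<sigma>0 \<sigma> u = Max (overlap n \<sigma>0 \<sigma> u ` {..<K})"

lemma overlap_le_max_overlap:
  "v < K \<Longrightarrow> overlap n \<sigma>0 \<sigma> u v \<le> max_overlap n K \<sigma>0 \<sigma> u"
  unfolding max_overlap_def by (rule Max_ge) auto

lemma max_overlap_attained:
  assumes "0 < K"
  obtains v where "v < K" "overlap n \<sigma>0 \<sigma> u v = max_overlap n K \<sigma>0 \<sigma> u"
proof -
  have "max_overlap n K \<sigma>0 \<sigma> u \<in> overlap n \<sigma>0 \<sigma> u ` {..<K}"
    unfolding max_overlap_def using assms by (intro Max_in) auto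
  then show ?thesis using that by (metis imageE lessThan_iff)
qed

lemma max_overlap_le_comm_size:
  assumes "0 < K"
  shows "max_overlap n K \<sigma>0 \<sigma> u \<le> comm_size n \<sigma>0 u"
proof -
  obtain v where "overlap n \<sigma>0 \<sigma> u v = max_overlap n K \<sigma>0 \<sigma> u"
    using max_overlap_attained[OF assms] .
  moreover have "overlap n \<sigma>0 \<sigma> u v \<le> comm_size n \<sigma>0 u"
    unfolding overlap_def comm_size_def by (rule card_mono) auto
  ultimately show ?thesis by simp
qed

lemma card_separated_add_overlap:
  "card {j. j < n \<and> \<sigma>0 i = \<sigma>0 j \<and> \<sigma> i \<noteq> \<sigma> j} + overlap n \<sigma>0 \<sigma> (\<sigma>0 i) (\<sigma> i)
     = comm_size n \<sigma>0 (\<sigma>0 i)"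
proof -
  have "card {j. j < n \<and> \<sigma>0 i = \<sigma>0 j \<and> \<sigma> i \<noteq> \<sigma> j} + overlap n \<sigma>0 \<sigma> (\<sigma>0 i) (\<sigma> i)
        = card ({j. j < n \<and> \<sigma>0 i = \<sigma>0 j \<and> \<sigma> i \<noteq> \<sigma> j} \<union> {j. j < n \<and> \<sigma>0 j = \<sigma>0 i \<and> \<sigma> j = \<sigma> i})"
    unfolding overlap_def by (intro card_Un_disjoint[symmetric]) auto
  also have "{j. j < n \<and> \<sigma>0 i = \<sigma>0 j \<and> \<sigma> i \<noteq> \<sigma> j} \<union> {j. j < n \<and> \<sigma>0 j = \<sigma>0 i \<and> \<sigma> j = \<sigma> i}
             = {j. j < n \<and> \<sigma>0 j = \<sigma>0 i}"
    by auto
  finally show ?thesis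
    by (simp add: comm_size_def)
qed

lemma sum_comm_size_defect_le_two_alpha:
  assumes "is_assignment n K \<sigma>" "is_assignment n K \<sigma>0"
  shows "(\<Sum>u<K. real (comm_size n \<sigma>0 u) *
            (real (comm_size n \<sigma>0 u) - real (max_overlap n K \<sigma>0 \<sigma> u)))
         \<le> 2 * real (alpha n \<sigma> \<sigma>0)"
proof -
  define R where "R i = {j. j < n \<and> \<sigma>0 i = \<sigma>0 j \<and> \<sigma> i \<noteq> \<sigma> j}" for i
  have defect: "real (comm_size n \<sigma>0 (\<sigma>0 i)) - real (max_overlap n K \<sigma>0 \<sigma> (\<sigma>0 i))
      \<le> real (card (R i))" if "i < n" for i
  proof -
    have "overlap n \<sigma>0 \<sigma> (\<sigma>0 i) (\<sigma> i) \<le> max_overlap n K \<sigma>0 \<sigma> (\<sigma>0 i)"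
      using assms(1) that by (intro overlap_le_max_overlap) (simp add: is_assignment_def)
    then have "comm_size n \<sigma>0 (\<sigma>0 i) \<le> card (R i) + max_overlap n K \<sigma>0 \<sigma> (\<sigma>0 i)"
      using card_separated_add_overlap[of n \<sigma>0 i \<sigma>] by (simp add: R_def)
    then show ?thesis
      by (simp flip: of_nat_add)
  qed
  have "(\<Sum>u<K. real (comm_size n \<sigma>0 u) *
           (real (comm_size n \<sigma>0 u) - real (max_overlap n K \<sigma>0 \<sigma> u)))
        = (\<Sum>i<n. real (comm_size n \<sigma>0 (\<sigma>0 i)) - real (max_overlap n K \<sigma>0 \<sigma> (\<sigma>0 i)))"
    using sum_comp_eq_sum_comm_size[OF assms(2),
        of "\<lambda>u. real (comm_size n \<sigma>0 u) - real (max_overlap n K \<sigma>0 \<sigma> u)"]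
    by simp
  also have "\<dots> \<le> (\<Sum>i<n. real (card (R i)))"
    using defect by (rule sum_mono) simp
  also have "\<dots> = real (card {(i, j). i < n \<and> j < n \<and> \<sigma>0 i = \<sigma>0 j \<and> \<sigma> i \<noteq> \<sigma> j})"
  proof -
    have "{(i, j). i < n \<and> j < n \<and> \<sigma>0 i = \<sigma>0 j \<and> \<sigma> i \<noteq> \<sigma> j} = Sigma {..<n} R"
      by (auto simp: R_def)
    then show ?thesis by (simp add: R_def)
  qed
  also have "\<dots> = 2 * real (alpha n \<sigma> \<sigma>0)"
    unfolding alpha_def by (subst card_ordered_pairs_eq_double) auto
  finally show ?thesis .
qed

lemma dist_assign_add_sum_matched_overlap_le:
  assumes "B \<subseteq> {..<K}" "inj_on f B" "f ` B \<subseteq> {..<K}"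
  shows "dist_assign n K \<sigma> \<sigma>0 + (\<Sum>u\<in>B. overlap n \<sigma>0 \<sigma> u (f u)) \<le> n"
proof -
  obtain p where p: "p permutes {..<K}" and pf: "\<And>u. u \<in> B \<Longrightarrow> p u = f u"
    using inj_on_extends_to_permutes[of "{..<K}" B f] assms by blast
  have "finite B"
    using assms(1) finite_subset by blast
  have "(\<Sum>u\<in>B. overlap n \<sigma>0 \<sigma> u (f u))
        = card (\<Union>u\<in>B. {i. i < n \<and> \<sigma>0 i = u \<and> \<sigma> i = f u})"
    unfolding overlap_def using \<open>finite B\<close> by (intro card_UN_disjoint[symmetric]) auto
  also have "\<dots> \<le> card {i. i < n \<and> \<sigma> i = (p \<circ> \<sigma>0) i}"
    using pf by (intro card_mono) auto
  finally show ?thesis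
    using dist_assign_le_hamming[OF p, of n \<sigma> \<sigma>0] hamming_add_card_agree[of n \<sigma> "p \<circ> \<sigma>0"]
    by linarith
qed

lemma dist_assign_add_sum_large_max_overlap_le:
  fixes U :: real
  assumes "0 < K" and "\<And>v. v < K \<Longrightarrow> real (comm_size n \<sigma> v) \<le> U"
  shows "dist_assign n K \<sigma> \<sigma>0
           + (\<Sum>u\<in>{u. u < K \<and> U < 2 * real (max_overlap n K \<sigma>0 \<sigma> u)}. max_overlap n K \<sigma>0 \<sigma> u)
         \<le> n"
proof -
  define B where "B = {u. u < K \<and> U < 2 * real (max_overlap n K \<sigma>0 \<sigma> u)}"
  define f where "f u = (SOME v. v < K \<and> overlap n \<sigma>0 \<sigma> u v = max_overlap n K \<sigma>0 \<sigma> u)" for u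
  have "\<exists>v. v < K \<and> overlap n \<sigma>0 \<sigma> u v = max_overlap n K \<sigma>0 \<sigma> u" for u
    using max_overlap_attained[OF assms(1)] by metis
  then have f: "f u < K \<and> overlap n \<sigma>0 \<sigma> u (f u) = max_overlap n K \<sigma>0 \<sigma> u" for u
    unfolding f_def by (rule someI_ex)
  have "inj_on f B"
  proof (rule inj_onI, rule ccontr)
    fix u u' assume "u \<in> B" "u' \<in> B" "f u = f u'" "u \<noteq> u'"
    \<comment> \<open>two disjoint large overlaps cannot fit into the same \<open>\<sigma>\<close>-community\<close>
    have "overlap n \<sigma>0 \<sigma> u (f u) + overlap n \<sigma>0 \<sigma> u' (f u)
          = card ({i. i < n \<and> \<sigma>0 i = u \<and> \<sigma> i = f u} \<union> {i. i < n \<and> \<sigma>0 i = u' \<and> \<sigma> i = f u})"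
      unfolding overlap_def using \<open>u \<noteq> u'\<close> by (intro card_Un_disjoint[symmetric]) auto
    also have "\<dots> \<le> comm_size n \<sigma> (f u)"
      unfolding comm_size_def by (intro card_mono) auto
    finally have "real (max_overlap n K \<sigma>0 \<sigma> u) + real (max_overlap n K \<sigma>0 \<sigma> u') \<le> U"
      using f[of u] f[of u'] \<open>f u = f u'\<close> assms(2)[of "f u"] by simp
    then show False
      using \<open>u \<in> B\<close> \<open>u' \<in> B\<close> by (simp add: B_def)
  qed
  moreover have "B \<subseteq> {..<K}" "f ` B \<subseteq> {..<K}"
    using f by (auto simp: B_def)
  ultimately have "dist_assign n K \<sigma> \<sigma>0 + (\<Sum>u\<in>B. overlap n \<sigma>0 \<sigma> u (f u)) \<le> n"
    by (intro dist_assign_add_sum_matched_overlap_le)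
  moreover have "(\<Sum>u\<in>B. overlap n \<sigma>0 \<sigma> u (f u)) = (\<Sum>u\<in>B. max_overlap n K \<sigma>0 \<sigma> u)"
    by (rule sum.cong) (use f in blast)+
  ultimately have "dist_assign n K \<sigma> \<sigma>0 + (\<Sum>u\<in>B. max_overlap n K \<sigma>0 \<sigma> u) \<le> n"
    by linarith
  then show ?thesis
    by (simp only: B_def)
qed

lemma sum_defect_lower_bound:
  fixes a M :: "'a \<Rightarrow> real" and L U m :: real
  assumes "finite I" "B \<subseteq> I"
    and bounds: "\<And>u. u \<in> I \<Longrightarrow> 0 \<le> M u \<and> M u \<le> a u \<and> L \<le> a u \<and> a u \<le> U"
    and small: "\<And>u. u \<in> I - B \<Longrightarrow> 2 * M u \<le> U"
    and "0 \<le> L" "U \<le> 2 * L"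
    and "m \<le> (\<Sum>u\<in>I. a u) - (\<Sum>u\<in>B. M u)"
  shows "L * (2 * L - U) * m \<le> 2 * U * (\<Sum>u\<in>I. a u * (a u - M u))"
proof -
  define e where "e u = a u - (if u \<in> B then M u else 0)" for u
  have per_class: "L * (2 * L - U) * e u \<le> 2 * U * (a u * (a u - M u))" if "u \<in> I" for u
  proof (cases "u \<in> B")
    case True
    have "L * (2 * L - U) \<le> L * a u"
      using bounds[OF that] \<open>0 \<le> L\<close> by (intro mult_left_mono) auto
    also have "\<dots> \<le> U * a u"
      using bounds[OF that] \<open>0 \<le> L\<close> by (intro mult_right_mono) auto
    also have "\<dots> \<le> 2 * U * a u"
      using bounds[OF that] \<open>0 \<le> L\<close> by simp
    finally have "L * (2 * L - U) * (a u - M u) \<le> 2 * U * a u * (a u - M u)"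
      using bounds[OF that] by (intro mult_right_mono) auto
    then show ?thesis
      using True by (simp add: e_def mult.assoc)
  next
    case False
    have "L * (2 * L - U) \<le> U * (2 * L - U)"
      using bounds[OF that] \<open>U \<le> 2 * L\<close> by (intro mult_right_mono) auto
    also have "\<dots> \<le> U * (2 * (a u - M u))"
      using bounds[OF that] small[of u] False that \<open>0 \<le> L\<close> by (intro mult_left_mono) auto
    also have "\<dots> = 2 * U * (a u - M u)"
      by simp
    finally have "L * (2 * L - U) * a u \<le> 2 * U * (a u - M u) * a u"
      using bounds[OF that] \<open>0 \<le> L\<close> by (intro mult_right_mono) auto
    then show ?thesis
      using False by (simp add: e_def algebra_simps)
  qed
  have "(\<Sum>u\<in>I. e u) = (\<Sum>u\<in>I. a u) - (\<Sum>u\<in>B. M u)"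
    using assms(1,2) by (simp add: e_def sum_subtractf sum.inter_restrict[symmetric] Int_absorb1)
  then have "L * (2 * L - U) * m \<le> L * (2 * L - U) * (\<Sum>u\<in>I. e u)"
    using assms(5-7) by (intro mult_left_mono) auto
  also have "\<dots> = (\<Sum>u\<in>I. L * (2 * L - U) * e u)"
    by (simp add: sum_distrib_left)
  also have "\<dots> \<le> (\<Sum>u\<in>I. 2 * U * (a u * (a u - M u)))"
    by (rule sum_mono) (rule per_class)
  finally show ?thesis
    by (simp add: sum_distrib_left)
qed

lemma alpha_ge_large_distance_bound:
  fixes \<eta>1 :: real
  assumes "0 \<le> \<eta>1" "\<eta>1 \<le> 1/3" "0 < K"
    and "is_assignment n K \<sigma>" "is_assignment n K \<sigma>0"
    and "balanced n K \<eta>1 \<sigma>" "balanced n K \<eta>1 \<sigma>0"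
  shows "(1 - \<eta>1) * (1 - 3 * \<eta>1) / (4 * (1 + \<eta>1)) * (real n / real K)
           * real (dist_assign n K \<sigma> \<sigma>0) \<le> real (alpha n \<sigma> \<sigma>0)"
proof -
  define s where "s = real n / real K"
  define d where "d = real (dist_assign n K \<sigma> \<sigma>0)"
  define a where "a u = real (comm_size n \<sigma>0 u)" for u
  define M where "M u = real (max_overlap n K \<sigma>0 \<sigma> u)" for u
  define B where "B = {u. u < K \<and> (1 + \<eta>1) * s < 2 * M u}"
  have "0 \<le> s" by (simp add: s_def)
  have "d + (\<Sum>u\<in>B. M u) \<le> real n"
    using dist_assign_add_sum_large_max_overlap_le[OF \<open>0 < K\<close>, of n \<sigma> "(1 + \<eta>1) * s" \<sigma>0]
      assms(6) by (simp add: balanced_def s_def d_def M_def B_def flip: of_nat_sum of_nat_add)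
  moreover have "(\<Sum>u<K. a u) = real n"
    using sum_comp_eq_sum_comm_size[OF assms(5), of "\<lambda>_. 1 :: real"] by (simp add: a_def)
  ultimately have "(1 - \<eta>1) * s * (2 * ((1 - \<eta>1) * s) - (1 + \<eta>1) * s) * d
      \<le> 2 * ((1 + \<eta>1) * s) * (\<Sum>u<K. a u * (a u - M u))"
  proof (intro sum_defect_lower_bound[where B = B])
    show "B \<subseteq> {..<K}"
      by (auto simp: B_def)
    show "0 \<le> M u \<and> M u \<le> a u \<and> (1 - \<eta>1) * s \<le> a u \<and> a u \<le> (1 + \<eta>1) * s"
      if "u \<in> {..<K}" for u
      using max_overlap_le_comm_size[OF \<open>0 < K\<close>] assms(7) that
      by (simp add: a_def M_def balanced_def s_def)
    show "2 * M u \<le> (1 + \<eta>1) * s" if "u \<in> {..<K} - B" for u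
      using that by (auto simp: B_def)
    show "0 \<le> (1 - \<eta>1) * s"
      using assms(2) \<open>0 \<le> s\<close> by simp
    show "(1 + \<eta>1) * s \<le> 2 * ((1 - \<eta>1) * s)"
      using assms(2) \<open>0 \<le> s\<close> mult_right_mono[of "1 + \<eta>1" "2 * (1 - \<eta>1)" s]
      by (simp add: algebra_simps)
  qed (use \<open>d + (\<Sum>u\<in>B. M u) \<le> real n\<close> in auto)
  also have "\<dots> \<le> 2 * ((1 + \<eta>1) * s) * (2 * real (alpha n \<sigma> \<sigma>0))"
    using sum_comm_size_defect_le_two_alpha[OF assms(4,5)] assms(1) \<open>0 \<le> s\<close>
    by (intro mult_left_mono) (simp_all add: a_def M_def)
  finally have "s * ((1 - \<eta>1) * (1 - 3 * \<eta>1) * s * d) \<le> s * (4 * (1 + \<eta>1) * real (alpha n \<sigma> \<sigma>0))"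
    by (simp add: algebra_simps)
  then have "(1 - \<eta>1) * (1 - 3 * \<eta>1) * s * d \<le> 4 * (1 + \<eta>1) * real (alpha n \<sigma> \<sigma>0)"
    using \<open>0 \<le> s\<close> assms(1) by (cases "s = 0") simp_all
  moreover have "0 < 4 * (1 + \<eta>1)"
    using assms(1) by simp
  ultimately show ?thesis
    unfolding s_def[symmetric] d_def[symmetric] by (simp add: field_simps)
qed

lemma large_distance_constant_le:
  fixes \<eta>1 :: real
  assumes "0 \<le> \<eta>1"
  shows "2 * (1 - 5 * \<eta>1) / 9 \<le> (1 - \<eta>1) * (1 - 3 * \<eta>1) / (4 * (1 + \<eta>1))"
proof -
  \<comment> \<open>the difference of the cross-multiplied sides is \<open>(1 - 2\<eta>1)\<^sup>2 + 63 \<eta>1\<^sup>2\<close>\<close>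
  have "8 * (1 - 5 * \<eta>1) * (1 + \<eta>1) \<le> 9 * (1 - \<eta>1) * (1 - 3 * \<eta>1)"
    using sum_squares_ge_zero[of "1 - 2 * \<eta>1" "sqrt 63 * \<eta>1"]
    by (simp add: algebra_simps power2_eq_square)
  then show ?thesis
    using assms by (simp add: field_simps)
qed

theorem lemma4:
  fixes n K m :: nat and \<eta>1 \<eta> :: real and \<sigma> \<sigma>0 :: "nat \<Rightarrow> nat"
  assumes "0 \<le> \<eta>1" and "\<eta>1 < 1/5"
    and "K \<ge> 1"
    and "is_assignment n K \<sigma>" and "is_assignment n K \<sigma>0"
    and "balanced n K \<eta>1 \<sigma>" and "balanced n K \<eta>1 \<sigma>0"
    and "dist_assign n K \<sigma> \<sigma>0 = m" and "0 < m" and "m < n"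
    and "\<eta> = 5 * \<eta>1"
  shows "real (min (alpha n \<sigma> \<sigma>0) (gamma n \<sigma> \<sigma>0)) \<ge>
           (if real m \<le> real n / (2 * real K)
            then (1 - \<eta>) * real n * real m / real K - real m ^ 2
            else 2 * (1 - \<eta>) * real n * real m / (9 * real K))"
proof -
  have "0 < K" "\<eta>1 \<le> 1/3"
    using assms(2,3) by simp_all
  have "dist_assign n K \<sigma>0 \<sigma> = m"
    using assms(8) dist_assign_commute by metis
  define c where "c = (1 - \<eta>1) * (1 - 3 * \<eta>1) / (4 * (1 + \<eta>1))"
  have "(1 - \<eta>1) * real n * real m / real K - real m ^ 2 \<le> real (alpha n \<sigma> \<sigma>0)"
       "(1 - \<eta>1) * real n * real m / real K - real m ^ 2 \<le> real (gamma n \<sigma> \<sigma>0)"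
    using alpha_ge_small_distance_bound[OF assms(5,7,8)]
      alpha_ge_small_distance_bound[OF assms(4,6) \<open>dist_assign n K \<sigma>0 \<sigma> = m\<close>]
    by (simp_all add: gamma_eq_alpha_swap)
  moreover have "c * (real n / real K) * real m \<le> real (alpha n \<sigma> \<sigma>0)"
       "c * (real n / real K) * real m \<le> real (gamma n \<sigma> \<sigma>0)"
    using alpha_ge_large_distance_bound[OF assms(1) \<open>\<eta>1 \<le> 1/3\<close> \<open>0 < K\<close> assms(4-7)]
      alpha_ge_large_distance_bound[OF assms(1) \<open>\<eta>1 \<le> 1/3\<close> \<open>0 < K\<close> assms(5,4,7,6)]
      assms(8) \<open>dist_assign n K \<sigma>0 \<sigma> = m\<close>
    by (simp_all add: c_def gamma_eq_alpha_swap)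
  moreover have "(1 - \<eta>) * real n * real m / real K \<le> (1 - \<eta>1) * real n * real m / real K"
    using assms(1,11) by (intro divide_right_mono mult_right_mono) auto
  moreover have "2 * (1 - \<eta>) * real n * real m / (9 * real K) \<le> c * (real n / real K) * real m"
  proof -
    have "2 * (1 - \<eta>) / 9 * (real n / real K * real m) \<le> c * (real n / real K * real m)"
      using large_distance_constant_le[OF assms(1)] assms(11)
      by (intro mult_right_mono) (simp_all add: c_def)
    then show ?thesis
      by (simp add: mult.assoc)
  qed
  ultimately show ?thesis
    by (simp add: of_nat_min)
qed

end
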